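(* Let $N\ge1$ and $1\le m\le N$ be integers, and let $D_{N,m}=|D_{N,m}\rangle\langle D_{N,m}|$ be the projector onto the Dicke state with $m$ excitations. Then $C_S(D_{N,m})\le m(2m+3)N+1$.
   Context: The Dicke state is $|D_{N,m}\rangle=\binom{N}{m}^{-1/2}\sum_\pi|0\rangle^{\otimes(N-m)}|1\rangle^{\otimes m}$, the normalized uniform superposition of all $N$-bit computational basis states of Hamming weight $m$. $\mathbb{I},\sigma_X,\sigma_Y,\sigma_Z$ are the identity and Pauli matrices. The notation $\sum_\pi \mathbb{I}^{\otimes j}\otimes A^{\otimes (N-j)}$ denotes the sum, over all distinct placements, of tensor products in which exactly $j$ of the $N$ factors are $\mathbb{I}$ and the other $N-j$ are $A$ (each distinct arrangement counted once). Measurement complexity: for an $N$-qubit permutation-invariant operator $\rho$, $C_S(\rho)$ is the minimal $n_A$ such that there exist real $b_i,c_i,d_i$ and real $\alpha_{ij}$ ($1\le i\le n_A$, $0\le j\le N$) with $\rho=\sum_{i=1}^{n_A}\sum_{j=0}^{N}\alpha_{ij}\sum_\pi\mathbb{I}^{\otimes j}\otimes A_i^{\otimes(N-j)}$, $A_i=b_i\sigma_X+c_i\sigma_Y+d_i\sigma_Z$. *)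

theory Defs
  imports Complex_Main
begin

text \<open>N-qubit operators are represented by their matrix entries in the computational
basis: basis states are bit lists of length N (False = |0>, True = |1>), and an
operator is a function (row bitstring, column bitstring) to complex.\<close>

type_synonym qop1 = "bool \<Rightarrow> bool \<Rightarrow> complex"
type_synonym qopN = "bool list \<Rightarrow> bool list \<Rightarrow> complex"

definition sigma_I :: qop1 where
  "sigma_I x y = (if x = y then 1 else 0)"

definition sigma_X :: qop1 where
  "sigma_X x y = (if x \<noteq> y then 1 else 0)"

definition sigma_Y :: qop1 where
  "sigma_Y x y = (if x = y then 0 else if \<not> x \<and> y then - \<i> else \<i>)"

definition sigma_Z :: qop1 where
  "sigma_Z x y = (if x \<noteq> y then 0 else if x then -1 else 1)"

definition pauli_comb :: "real \<Rightarrow> real \<Rightarrow> real \<Rightarrow> qop1" where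
  "pauli_comb b c d x y =
     complex_of_real b * sigma_X x y + complex_of_real c * sigma_Y x y
     + complex_of_real d * sigma_Z x y"

definition tensor :: "nat \<Rightarrow> (nat \<Rightarrow> qop1) \<Rightarrow> qopN" where
  "tensor N M x y = (\<Prod>k<N. M k (x ! k) (y ! k))"

definition perm_sum :: "nat \<Rightarrow> nat \<Rightarrow> qop1 \<Rightarrow> qopN" where
  "perm_sum N j A x y =
     (\<Sum>S\<in>{S. S \<subseteq> {..<N} \<and> card S = j}.
        tensor N (\<lambda>k. if k \<in> S then sigma_I else A) x y)"

definition hamming_weight :: "bool list \<Rightarrow> nat" where
  "hamming_weight x = length (filter id x)"

definition dicke_proj :: "nat \<Rightarrow> nat \<Rightarrow> qopN" where
  "dicke_proj N m x y =
     (if hamming_weight x = m \<and> hamming_weight y = m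
      then 1 / of_nat (N choose m) else 0)"

definition decomposable :: "nat \<Rightarrow> qopN \<Rightarrow> nat \<Rightarrow> bool" where
  "decomposable N \<rho> nA =
     (\<exists>(b::nat \<Rightarrow> real) (c::nat \<Rightarrow> real) (d::nat \<Rightarrow> real) (\<alpha>::nat \<Rightarrow> nat \<Rightarrow> real).
        \<forall>x y. length x = N \<longrightarrow> length y = N \<longrightarrow>
          \<rho> x y = (\<Sum>i<nA. \<Sum>j\<le>N. complex_of_real (\<alpha> i j) *
                      perm_sum N j (pauli_comb (b i) (c i) (d i)) x y))"

definition meas_complexity :: "nat \<Rightarrow> qopN \<Rightarrow> nat" where
  "meas_complexity N \<rho> = (LEAST nA. decomposable N \<rho> nA)"

end

theory Submission
  imports Defs "HOL-Computational_Algebra.Polynomial"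
begin

text \<open>For a complex number z, the operator (|0> + z|1>)(<0| + conj z <1|) equals
((1 + |z|^2)/2) I + A_z with A_z a real combination of Pauli matrices, so its N-fold tensor
power, whose entries are z^|x| (conj z)^|y|, is a combination of the permutation sums of A_z.
The points z and -1/conj z are antipodal on the Bloch sphere, so A_z and A_(-1/conj z) are
proportional and the two tensor powers cost a single direction.

Writing z = u w, averaging over the (2m+1)-st roots of unity w keeps only |x| = |y| once
|x| + |y| = 2m, and a combination over 2N+2 real moduli u, dual to the monomials u^t with
t <= 2N+1, keeps only |x| + |y| = 2m. What remains is the Dicke projector. Taking the moduli
1, ..., N+1 together with their antipodes -1, ..., -1/(N+1) yields (2m+1)(N+1) directions,
which does not exceed m(2m+3)N+1.\<close>

lemma exists_moment_selector:
  fixes U :: "'a::field set"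
  assumes "finite U"
  shows "\<exists>c. \<forall>t < card U. (\<Sum>u\<in>U. c u * u ^ t) = (if t = r then 1 else 0)"
proof -
  define L where "L u = smult (1 / (\<Prod>v\<in>U-{u}. (u - v))) (\<Prod>v\<in>U-{u}. [:-v, 1:])" for u
  have poly_L: "poly (L u) w = (if w = u then 1 else 0)" if "u \<in> U" "w \<in> U" for u w
  proof (cases "w = u")
    case True
    have "(\<Prod>v\<in>U-{u}. (u - v)) \<noteq> 0" using assms by (simp add: prod_zero_iff)
    then show ?thesis using True by (simp add: L_def poly_prod)
  next
    case False
    have "(\<Prod>v\<in>U-{u}. poly [:-v, 1:] w) = 0"
      using assms that False by (intro prod_zero) (auto intro!: bexI[of _ w])
    then show ?thesis using False by (simp add: L_def poly_prod)
  qed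
  have degree_L: "degree (L u) \<le> card U - 1" if "u \<in> U" for u
  proof -
    have "degree (\<Prod>v\<in>U-{u}. [:-v, 1:]) \<le> (\<Sum>v\<in>U-{u}. degree [:-v, (1::'a):])"
      by (rule degree_prod_sum_le[unfolded o_def]) (use assms in auto)
    also have "\<dots> = card U - 1" using that assms by simp
    finally show ?thesis unfolding L_def by (meson degree_smult_le order_trans)
  qed
  have monom_eq: "(\<Sum>u\<in>U. smult (u ^ t) (L u)) = monom 1 t" if t: "t < card U" for t
  proof (rule ccontr)
    define q where "q = monom 1 t - (\<Sum>u\<in>U. smult (u ^ t) (L u))"
    assume "(\<Sum>u\<in>U. smult (u ^ t) (L u)) \<noteq> monom 1 t"
    then have "q \<noteq> 0" by (simp add: q_def)
    have "degree (\<Sum>u\<in>U. smult (u ^ t) (L u)) \<le> card U - 1"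
      using degree_L by (intro degree_sum_le assms order_trans[OF degree_smult_le]) auto
    then have "degree q \<le> card U - 1"
      unfolding q_def using t by (intro degree_diff_le) (simp_all add: degree_monom_eq)
    moreover have "U \<subseteq> {x. poly q x = 0}"
    proof
      fix w assume w: "w \<in> U"
      have "poly (\<Sum>u\<in>U. smult (u ^ t) (L u)) w = (\<Sum>u\<in>U. u ^ t * (if w = u then 1 else 0))"
        by (simp add: poly_sum poly_L w)
      also have "\<dots> = w ^ t" using assms w by (simp add: if_distrib sum.delta cong: if_cong)
      finally show "w \<in> {x. poly q x = 0}" by (simp add: q_def poly_monom)
    qed
    then have "card U \<le> card {x. poly q x = 0}"
      by (intro card_mono poly_roots_finite \<open>q \<noteq> 0\<close>)
    ultimately show False using card_poly_roots_bound[OF \<open>q \<noteq> 0\<close>] t by linarith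
  qed
  have "(\<Sum>u\<in>U. coeff (L u) r * u ^ t) = (if t = r then 1 else 0)" if "t < card U" for t
  proof -
    have "(\<Sum>u\<in>U. coeff (L u) r * u ^ t) = coeff (\<Sum>u\<in>U. smult (u ^ t) (L u)) r"
      by (simp add: coeff_sum mult.commute)
    then show ?thesis using monom_eq[OF that] by (simp add: coeff_monom)
  qed
  then show ?thesis by (intro exI[of _ "\<lambda>u. coeff (L u) r"] allI impI)
qed

lemma sum_roots_unity_power:
  assumes "0 < e" "e < n"
  shows "(\<Sum>z | z ^ n = 1. z ^ e) = (0::complex)"
proof -
  define \<omega> where "\<omega> = cis (2 * pi * real e / real n)"
  have "\<omega> \<noteq> 1"
    using inj_onD[OF bij_betw_imp_inj_on[OF bij_betw_roots_unity], of n e 0] assms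
    by (auto simp: \<omega>_def)
  have "\<omega> ^ n = cis (2 * pi * real e)"
    using assms by (simp add: \<omega>_def DeMoivre)
  also have "\<dots> = 1" by (rule cis_multiple_2pi) simp
  finally have "\<omega> ^ n = 1" .
  have "(\<Sum>z | z ^ n = 1. z ^ e) = (\<Sum>k<n. cis (2 * pi * real k / real n) ^ e)"
    using assms by (intro sum.reindex_bij_betw[symmetric] bij_betw_roots_unity) simp
  also have "\<dots> = (\<Sum>k<n. \<omega> ^ k)"
    by (intro sum.cong refl) (simp add: \<omega>_def DeMoivre mult_ac)
  also have "\<dots> = 0"
    using \<open>\<omega> \<noteq> 1\<close> \<open>\<omega> ^ n = 1\<close> by (simp add: geometric_sum)
  finally show ?thesis .
qed

lemma root_unity_mult_cnj:
  fixes z :: complex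
  assumes "z ^ n = 1" "0 < n"
  shows "z * cnj z = 1"
  using power_eq_1_iff[OF assms(1)] assms(2) by (auto simp flip: complex_norm_square)

lemma sum_roots_unity_power_mult_cnj_power:
  assumes "a < n" "b < n"
  shows "(\<Sum>z | z ^ n = 1. z ^ a * cnj z ^ b) = (if a = b then of_nat n else (0::complex))"
proof -
  have split: "z ^ a * cnj z ^ b = (if b \<le> a then z ^ (a - b) else cnj z ^ (b - a))"
    if "z ^ n = 1" for z
  proof -
    have "z ^ a * cnj z ^ b = (z * cnj z) ^ min a b * (z ^ (a - min a b) * cnj z ^ (b - min a b))"
      by (simp add: power_mult_distrib mult_ac flip: power_add)
    then show ?thesis using root_unity_mult_cnj[OF that] assms by (simp add: min_def)
  qed
  have "(\<Sum>z | z ^ n = 1. z ^ a * cnj z ^ b) =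
        (\<Sum>z | z ^ n = 1. if b \<le> a then z ^ (a - b) else cnj z ^ (b - a))"
    by (rule sum.cong) (simp_all add: split)
  also have "\<dots> = (if a = b then of_nat n else 0)"
  proof -
    consider "a = b" | "b < a" | "a < b" by linarith
    then show ?thesis
    proof cases
      case 1
      then show ?thesis using assms by (simp add: card_roots_unity_eq)
    next
      case 2
      then show ?thesis using sum_roots_unity_power[of "a - b" n] assms by simp
    next
      case 3
      have "(\<Sum>z | z ^ n = 1. cnj z ^ (b - a)) = cnj (\<Sum>z | z ^ n = 1. z ^ (b - a))" by simp
      then show ?thesis using sum_roots_unity_power[of "b - a" n] assms 3 by simp
    qed
  qed
  finally show ?thesis .
qed

text \<open>coherent_op z is (|0> + z|1>)(<0| + conj z <1|); bloch_op z is its traceless part.\<close>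

definition coherent_op :: "complex \<Rightarrow> qop1" where
  "coherent_op z a b = (if a then z else 1) * (if b then cnj z else 1)"

definition bloch_op :: "complex \<Rightarrow> qop1" where
  "bloch_op z = pauli_comb (Re z) (Im z) ((1 - (cmod z)\<^sup>2) / 2)"

lemma prod_nth_if_eq_power_hamming_weight:
  fixes z :: "'a::comm_monoid_mult"
  shows "(\<Prod>k<length x. if x ! k then z else 1) = z ^ hamming_weight x"
  by (induction x) (simp_all del: prod.lessThan_Suc add: prod.lessThan_Suc_shift hamming_weight_def)

lemma tensor_coherent_op:
  assumes "length x = N" "length y = N"
  shows "tensor N (\<lambda>_. coherent_op z) x y = z ^ hamming_weight x * cnj z ^ hamming_weight y"
  using assms prod_nth_if_eq_power_hamming_weight[of x z] prod_nth_if_eq_power_hamming_weight[of y "cnj z"]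
  by (simp add: tensor_def coherent_op_def prod.distrib)

lemma coherent_op_eq_identity_plus_bloch_op:
  "coherent_op z a b = of_real ((1 + (cmod z)\<^sup>2) / 2) * sigma_I a b + bloch_op z a b"
  unfolding coherent_op_def bloch_op_def cmod_power2
  by (cases a; cases b)
     (simp_all add: pauli_comb_def sigma_I_def sigma_X_def sigma_Y_def sigma_Z_def
        complex_eq_iff power2_eq_square field_simps)

lemma bloch_op_antipode:
  assumes "z \<noteq> 0"
  shows "bloch_op (- 1 / cnj z) a b = of_real (- 1 / (cmod z)\<^sup>2) * bloch_op z a b"
proof -
  define l where "l = - 1 / (cmod z)\<^sup>2"
  have "(cmod (- 1 / cnj z))\<^sup>2 = 1 / (cmod z)\<^sup>2"
    by (simp add: norm_divide power_divide)
  then have d: "(1 - (cmod (- 1 / cnj z))\<^sup>2) / 2 = l * ((1 - (cmod z)\<^sup>2) / 2)"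
    using assms by (simp add: l_def field_simps)
  have "- 1 / cnj z = of_real l * z"
    using assms by (simp add: l_def field_simps flip: complex_norm_square)
  then have Re_Im: "Re (- 1 / cnj z) = l * Re z" "Im (- 1 / cnj z) = l * Im z"
    by simp_all
  show ?thesis
    unfolding bloch_op_def pauli_comb_def d Re_Im l_def[symmetric] by (simp add: algebra_simps)
qed

lemma tensor_if_mem:
  assumes "S \<subseteq> {..<N}"
  shows "tensor N (\<lambda>k. if k \<in> S then B else A) x y =
         (\<Prod>k\<in>S. B (x ! k) (y ! k)) * (\<Prod>k\<in>{..<N} - S. A (x ! k) (y ! k))"
proof -
  have "tensor N (\<lambda>k. if k \<in> S then B else A) x y =
        (\<Prod>k<N. if k \<in> S then B (x ! k) (y ! k) else A (x ! k) (y ! k))"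
    unfolding tensor_def by (intro prod.cong) auto
  also have "\<dots> = (\<Prod>k\<in>S. B (x ! k) (y ! k)) * (\<Prod>k\<in>{..<N} - S. A (x ! k) (y ! k))"
    using assms by (simp add: prod.If_cases Int_absorb1 Diff_eq)
  finally show ?thesis .
qed

lemma tensor_identity_plus_expand:
  "tensor N (\<lambda>_ a b. of_real s * sigma_I a b + of_real t * A a b) x y =
   (\<Sum>j\<le>N. of_real (s ^ j * t ^ (N - j)) * perm_sum N j A x y)"
proof -
  let ?T = "\<lambda>S. complex_of_real (s ^ card S * t ^ (N - card S)) *
                 tensor N (\<lambda>k. if k \<in> S then sigma_I else A) x y"
  have "tensor N (\<lambda>_ a b. of_real s * sigma_I a b + of_real t * A a b) x y =
        (\<Sum>S\<in>Pow {..<N}. (\<Prod>k\<in>S. of_real s * sigma_I (x ! k) (y ! k)) *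
                          (\<Prod>k\<in>{..<N} - S. of_real t * A (x ! k) (y ! k)))"
    unfolding tensor_def by (rule prod_add) simp
  also have "\<dots> = (\<Sum>S\<in>Pow {..<N}. ?T S)"
  proof (rule sum.cong[OF refl])
    fix S assume S: "S \<in> Pow {..<N}"
    then have "finite S" by (auto intro: finite_subset)
    then have "card ({..<N} - S) = N - card S" using S by (simp add: card_Diff_subset)
    then show "(\<Prod>k\<in>S. of_real s * sigma_I (x ! k) (y ! k)) *
               (\<Prod>k\<in>{..<N} - S. of_real t * A (x ! k) (y ! k)) = ?T S"
      using S by (simp add: tensor_if_mem prod.distrib)
  qed
  also have "Pow {..<N} = (\<Union>j\<in>{..N}. {S. S \<subseteq> {..<N} \<and> card S = j})"
    by (auto dest: card_mono[of "{..<N}", simplified])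
  also have "(\<Sum>S\<in>\<dots>. ?T S) = (\<Sum>j\<le>N. \<Sum>S | S \<subseteq> {..<N} \<and> card S = j. ?T S)"
    by (rule sum.UNION_disjoint) (auto intro: finite_subset)
  also have "\<dots> = (\<Sum>j\<le>N. of_real (s ^ j * t ^ (N - j)) * perm_sum N j A x y)"
    unfolding perm_sum_def sum_distrib_left by (intro sum.cong refl) auto
  finally show ?thesis .
qed

lemma tensor_coherent_pair_in_span:
  assumes "z \<noteq> 0"
  shows "\<exists>\<alpha>. \<forall>x y. length x = N \<longrightarrow> length y = N \<longrightarrow>
           of_real p * tensor N (\<lambda>_. coherent_op z) x y
           + of_real q * tensor N (\<lambda>_. coherent_op (- 1 / cnj z)) x y
           = (\<Sum>j\<le>N. of_real (\<alpha> j) * perm_sum N j (bloch_op z) x y)"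
proof -
  define l where "l = - 1 / (cmod z)\<^sup>2"
  define s where "s = (1 + (cmod z)\<^sup>2) / 2"
  define s' where "s' = (1 + 1 / (cmod z)\<^sup>2) / 2"
  have "(cmod (- 1 / cnj z))\<^sup>2 = 1 / (cmod z)\<^sup>2"
    by (simp add: norm_divide power_divide)
  then have antipode: "coherent_op (- 1 / cnj z) =
      (\<lambda>a b. of_real s' * sigma_I a b + of_real l * bloch_op z a b)"
    by (intro ext)
       (simp only: coherent_op_eq_identity_plus_bloch_op bloch_op_antipode[OF assms] s'_def l_def)
  have coherent: "coherent_op z = (\<lambda>a b. of_real s * sigma_I a b + of_real 1 * bloch_op z a b)"
    by (intro ext) (simp add: coherent_op_eq_identity_plus_bloch_op s_def)
  show ?thesis
    unfolding coherent antipode tensor_identity_plus_expand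
    by (intro exI[of _ "\<lambda>j. p * s ^ j * 1 ^ (N - j) + q * s' ^ j * l ^ (N - j)"] allI impI)
       (simp add: sum_distrib_left sum.distrib algebra_simps)
qed

lemma decomposable_sum_coherent_pairs:
  assumes "finite I" "card I = nA" "\<forall>i\<in>I. z i \<noteq> 0"
    and \<rho>: "\<And>x y. length x = N \<Longrightarrow> length y = N \<Longrightarrow>
      \<rho> x y = (\<Sum>i\<in>I. of_real (p i) * tensor N (\<lambda>_. coherent_op (z i)) x y
                      + of_real (q i) * tensor N (\<lambda>_. coherent_op (- 1 / cnj (z i))) x y)"
  shows "decomposable N \<rho> nA"
proof -
  have "\<forall>i\<in>I. \<exists>\<alpha>. \<forall>x y. length x = N \<longrightarrow> length y = N \<longrightarrow>
      of_real (p i) * tensor N (\<lambda>_. coherent_op (z i)) x y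
      + of_real (q i) * tensor N (\<lambda>_. coherent_op (- 1 / cnj (z i))) x y
      = (\<Sum>j\<le>N. of_real (\<alpha> j) * perm_sum N j (bloch_op (z i)) x y)"
    using assms(3) tensor_coherent_pair_in_span by blast
  from bchoice[OF this] obtain \<alpha> where \<alpha>: "\<forall>i\<in>I. \<forall>x y. length x = N \<longrightarrow> length y = N \<longrightarrow>
      of_real (p i) * tensor N (\<lambda>_. coherent_op (z i)) x y
      + of_real (q i) * tensor N (\<lambda>_. coherent_op (- 1 / cnj (z i))) x y
      = (\<Sum>j\<le>N. of_real (\<alpha> i j) * perm_sum N j (bloch_op (z i)) x y)" ..
  obtain h where h: "bij_betw h {..<nA} I"
    using ex_bij_betw_nat_finite[OF assms(1)] assms(2) by (auto simp: atLeast0LessThan)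
  have eq: "\<rho> x y = (\<Sum>k<nA. \<Sum>j\<le>N. of_real (\<alpha> (h k) j) * perm_sum N j (bloch_op (z (h k))) x y)"
    if "length x = N" "length y = N" for x y
  proof -
    have "\<rho> x y = (\<Sum>i\<in>I. \<Sum>j\<le>N. of_real (\<alpha> i j) * perm_sum N j (bloch_op (z i)) x y)"
      using that \<alpha> by (simp add: \<rho>)
    also have "\<dots> = (\<Sum>k<nA. \<Sum>j\<le>N. of_real (\<alpha> (h k) j) * perm_sum N j (bloch_op (z (h k))) x y)"
      by (rule sum.reindex_bij_betw[OF h, symmetric])
    finally show ?thesis .
  qed
  show ?thesis
    unfolding decomposable_def
    by (intro exI[of _ "\<lambda>k. Re (z (h k))"] exI[of _ "\<lambda>k. Im (z (h k))"]
        exI[of _ "\<lambda>k. (1 - (cmod (z (h k)))\<^sup>2) / 2"] exI[of _ "\<lambda>k. \<alpha> (h k)"] allI impI)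
       (simp add: eq bloch_op_def)
qed

lemma dicke_proj_eq_coherent_average:
  fixes c :: "real \<Rightarrow> real"
  assumes U: "finite U" "2 * N < card U"
    and c: "\<forall>t < card U. (\<Sum>u\<in>U. c u * u ^ t) = (if t = 2 * m then 1 else 0)"
    and n: "2 * m < n"
    and xy: "length x = N" "length y = N"
  shows "dicke_proj N m x y =
    (\<Sum>\<zeta> | \<zeta> ^ n = 1. \<Sum>u\<in>U. of_real (c u / (real (N choose m) * real n)) *
                             tensor N (\<lambda>_. coherent_op (of_real u * \<zeta>)) x y)"
proof -
  define hx where "hx = hamming_weight x"
  define hy where "hy = hamming_weight y"
  have "hx \<le> N" "hy \<le> N"
    using xy length_filter_le by (metis hx_def hy_def hamming_weight_def)+
  then have moment: "(\<Sum>u\<in>U. c u * u ^ (hx + hy)) = (if hx + hy = 2 * m then 1 else 0)"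
    using c U by simp
  define K where "K = 1 / (real (N choose m) * real n)"
  have coherent: "tensor N (\<lambda>_. coherent_op (of_real u * \<zeta>)) x y =
      of_real (u ^ (hx + hy)) * (\<zeta> ^ hx * cnj \<zeta> ^ hy)" for u \<zeta>
    using tensor_coherent_op[OF xy] by (simp add: hx_def hy_def power_mult_distrib power_add)
  have "(\<Sum>\<zeta> | \<zeta> ^ n = 1. \<Sum>u\<in>U. of_real (c u / (real (N choose m) * real n)) *
                             tensor N (\<lambda>_. coherent_op (of_real u * \<zeta>)) x y) =
      (\<Sum>\<zeta> | \<zeta> ^ n = 1. \<Sum>u\<in>U. of_real K * ((\<zeta> ^ hx * cnj \<zeta> ^ hy) * of_real (c u * u ^ (hx + hy))))"
    unfolding coherent K_def by (simp add: mult_ac)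
  also have "\<dots> = of_real K *
      ((\<Sum>\<zeta> | \<zeta> ^ n = 1. \<zeta> ^ hx * cnj \<zeta> ^ hy) * of_real (\<Sum>u\<in>U. c u * u ^ (hx + hy)))"
    unfolding of_real_sum sum_product by (simp only: sum_distrib_left)
  also have "\<dots> = dicke_proj N m x y"
  proof (cases "hx + hy = 2 * m")
    case True
    then have "hx < n" "hy < n" using n by linarith+
    moreover have "hx = hy \<longleftrightarrow> hx = m \<and> hy = m" using True by linarith
    ultimately show ?thesis
      unfolding moment using n True
      by (simp add: K_def sum_roots_unity_power_mult_cnj_power dicke_proj_def hx_def hy_def)
  next
    case False
    then show ?thesis unfolding moment by (auto simp: dicke_proj_def hx_def hy_def)
  qed
  finally show ?thesis ..
qed

lemma decomposable_dicke_proj: "decomposable N (dicke_proj N m) ((2 * m + 1) * (N + 1))"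
proof -
  define n where "n = 2 * m + 1"
  define P where "P = real ` {1..N + 1}"
  define U where "U = P \<union> (\<lambda>u. - 1 / u) ` P"
  define I where "I = {\<zeta>::complex. \<zeta> ^ n = 1} \<times> P"
  define K where "K = real (N choose m) * real n"
  have "finite P" "card P = N + 1" "\<forall>u\<in>P. 0 < u"
    by (auto simp: P_def card_image)
  moreover have "inj_on (\<lambda>u. - 1 / u) P"
    by (auto simp: inj_on_def)
  moreover have "P \<inter> (\<lambda>u. - 1 / u) ` P = {}"
  proof -
    have "- 1 / v < 0 \<and> 0 < u" if "u \<in> P" "v \<in> P" for u v
      using \<open>\<forall>u\<in>P. 0 < u\<close> that by (simp add: divide_less_0_iff)
    then show ?thesis by fastforce
  qed
  ultimately have "finite U" "card U = 2 * (N + 1)"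
    and sum_U: "\<And>g :: real \<Rightarrow> complex. (\<Sum>u\<in>U. g u) = (\<Sum>u\<in>P. g u + g (- 1 / u))"
    by (simp_all add: U_def card_Un_disjoint card_image sum.union_disjoint sum.reindex sum.distrib)
  from exists_moment_selector[OF \<open>finite U\<close>, of "2 * m"]
  obtain c where c: "\<forall>t < card U. (\<Sum>u\<in>U. c u * u ^ t) = (if t = 2 * m then 1 else 0)" ..
  have antipode: "- 1 / cnj (of_real u * \<zeta>) = of_real (- 1 / u) * \<zeta>" if "\<zeta> ^ n = 1" for u \<zeta>
  proof -
    have "cnj \<zeta> = inverse \<zeta>"
      using inverse_unique[OF root_unity_mult_cnj[OF that]] by (simp add: n_def)
    then show ?thesis by (simp add: divide_inverse mult.commute)
  qed
  show ?thesis
  proof (rule decomposable_sum_coherent_pairs[where I = I and z = "\<lambda>i. of_real (snd i) * fst i"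
        and p = "\<lambda>i. c (snd i) / K" and q = "\<lambda>i. c (- 1 / snd i) / K"])
    have "finite {\<zeta>::complex. \<zeta> ^ n = 1}" "card {\<zeta>::complex. \<zeta> ^ n = 1} = n"
      using finite_roots_unity[of n] card_roots_unity_eq[of n] by (simp_all add: n_def)
    then show "finite I" "card I = (2 * m + 1) * (N + 1)"
      using \<open>finite P\<close> \<open>card P = N + 1\<close>
      unfolding I_def n_def[symmetric] by (simp_all add: card_cartesian_product)
    show "\<forall>i\<in>I. of_real (snd i) * fst i \<noteq> 0"
      using \<open>\<forall>u\<in>P. 0 < u\<close> by (auto simp: I_def n_def)
    fix x y :: "bool list" assume xy: "length x = N" "length y = N"
    have "dicke_proj N m x y = (\<Sum>\<zeta> | \<zeta> ^ n = 1. \<Sum>u\<in>U. of_real (c u / K) *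
        tensor N (\<lambda>_. coherent_op (of_real u * \<zeta>)) x y)"
      unfolding K_def using \<open>card U = 2 * (N + 1)\<close>
      by (intro dicke_proj_eq_coherent_average[where n = n, OF \<open>finite U\<close> _ c _ xy]) (simp_all add: n_def)
    also have "\<dots> = (\<Sum>i\<in>I. of_real (c (snd i) / K) * tensor N (\<lambda>_. coherent_op (of_real (snd i) * fst i)) x y
        + of_real (c (- 1 / snd i) / K) * tensor N (\<lambda>_. coherent_op (- 1 / cnj (of_real (snd i) * fst i))) x y)"
      unfolding I_def sum.cartesian_product' sum_U
      by (intro sum.cong refl) (simp only: antipode mem_Collect_eq prod.sel)
    finally show "dicke_proj N m x y = \<dots>" .
  qed
qed

theorem theorem3:
  fixes N m :: nat
  assumes "1 \<le> N" and "1 \<le> m" and "m \<le> N"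
  shows "(\<exists>nA. decomposable N (dicke_proj N m) nA) \<and>
         meas_complexity N (dicke_proj N m) \<le> m * (2 * m + 3) * N + 1"
proof
  show "\<exists>nA. decomposable N (dicke_proj N m) nA"
    using decomposable_dicke_proj by blast
  have "meas_complexity N (dicke_proj N m) \<le> (2 * m + 1) * (N + 1)"
    unfolding meas_complexity_def by (rule Least_le) (rule decomposable_dicke_proj)
  also have "\<dots> \<le> m * (2 * m + 3) * N + 1"
  proof -
    obtain a b where "N = a + 1" "m = b + 1"
      using assms by (metis add.commute le_add_diff_inverse)
    then show ?thesis by (simp add: algebra_simps)
  qed
  finally show "meas_complexity N (dicke_proj N m) \<le> m * (2 * m + 3) * N + 1" .
qed

end
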